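(* Let $b\ge2$ be an integer and let $w=d_1\dots d_p$ be a fixed block of $b$-ary digits with $p\ge1$. Let $v=d_2\dots d_p$. Then $M_w(v,k)=Z_w(v,k)(b^{-1})$, the total mass $\sum b^{-|X|}$ of the strings $X$ with prefix $v$ and exactly $k$ occurrences of $w$, is finite and has the same value for every $k\ge0$.
   Context: Strings are finite sequences over $\{0,\dots,b-1\}$. $|X|$ is the length of $X$. Occurrences of $w$ are counted possibly overlapping. $Z_w(v,k)=\sum_l c_l t^l$, where $c_l$ is the number of strings of length $l$ with prefix $v$ containing exactly $k$ occurrences of $w$. *)

theory Defs
  imports Complex_Main "HOL-Library.Sublist"
begin

definition b_strings :: "nat \<Rightarrow> nat list set" where
  "b_strings b = {X. set X \<subseteq> {..<b}}"

definition occurrences :: "nat list \<Rightarrow> nat list \<Rightarrow> nat" where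
  "occurrences w X = card {i. i + length w \<le> length X \<and> take (length w) (drop i X) = w}"

text \<open>Coefficient c_l of Z_w(v,k): number of b-ary strings of length l with prefix v
  containing exactly k occurrences of w.\<close>
definition Z_coeff :: "nat \<Rightarrow> nat list \<Rightarrow> nat list \<Rightarrow> nat \<Rightarrow> nat \<Rightarrow> nat" where
  "Z_coeff b w v k l = card {X \<in> b_strings b. length X = l \<and> prefix v X \<and> occurrences w X = k}"

end

theory Submission
  imports Defs
begin

text \<open>Write \<open>v = tl w\<close> and the strings with prefix \<open>v\<close> as \<open>v @ Y\<close>, weighted by (1/b)^|Y|.
  Cutting \<open>Y\<close> right after the first occurrence of \<open>w\<close> gives \<open>Y = Y\<^sub>1 @ Y\<^sub>2\<close>, where \<open>v @ Y\<^sub>1\<close>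
  ends with \<open>w\<close>, hence with \<open>v\<close>, so the remaining occurrences are exactly those in \<open>v @ Y\<^sub>2\<close>.
  Hence M(k + 1) = F * M(k), where F is the total weight of the possible \<open>Y\<^sub>1\<close>. Appending a letter
  to a string avoiding \<open>w\<close> yields either a string avoiding \<open>w\<close> or one of the \<open>Y\<^sub>1\<close>, so
  F = 1 - lim A(N), where A(N) is the weight of the strings of length N avoiding \<open>w\<close>. Each block of
  |w| consecutive letters of such a string differs from \<open>w\<close>, so A(N) decays geometrically:
  M(0) = \<Sum> A(N) is finite and F = 1.\<close>

lemma suffix_iff_drop:
  "suffix xs ys \<longleftrightarrow> length xs \<le> length ys \<and> drop (length ys - length xs) ys = xs"
  by (metis diff_diff_cancel suffix_drop suffix_length_le suffix_take length_drop append_eq_conv_conj)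

lemma finite_occurrence_positions:
  "finite {i. i + length w \<le> length X \<and> take (length w) (drop i X) = w}"
  by (rule finite_subset[of _ "{..length X}"]) auto

lemma occurrences_snoc:
  "occurrences w (X @ [c]) = occurrences w X + (if suffix w (X @ [c]) then 1 else 0)"
proof -
  let ?p = "length w"
  let ?A = "{i. i + ?p \<le> length X \<and> take ?p (drop i X) = w}"
  have "{i. i + ?p \<le> length (X @ [c]) \<and> take ?p (drop i (X @ [c])) = w}
      = ?A \<union> (if suffix w (X @ [c]) then {Suc (length X) - ?p} else {})"
  proof (rule set_eqI)
    fix i
    show "i \<in> {i. i + ?p \<le> length (X @ [c]) \<and> take ?p (drop i (X @ [c])) = w} \<longleftrightarrow>
      i \<in> ?A \<union> (if suffix w (X @ [c]) then {Suc (length X) - ?p} else {})"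
    proof (cases "i + ?p \<le> length X")
      case False
      then have "i \<in> {i. i + ?p \<le> length (X @ [c]) \<and> take ?p (drop i (X @ [c])) = w}
          \<longleftrightarrow> i + ?p = length (X @ [c]) \<and> drop i (X @ [c]) = w"
        by auto
      also have "\<dots> \<longleftrightarrow> suffix w (X @ [c]) \<and> i = length (X @ [c]) - ?p"
        unfolding suffix_iff_drop by (auto simp del: drop_append length_append)
      finally show ?thesis using False by auto
    qed (auto simp: take_append)
  qed
  moreover have "Suc (length X) - ?p \<notin> ?A" by auto
  ultimately show ?thesis
    unfolding occurrences_def using finite_occurrence_positions[of w X] by auto
qed

lemma occurrences_eq_0_if_shorter: "length X < length w \<Longrightarrow> occurrences w X = 0"
  unfolding occurrences_def by auto

lemma occurrences_pos_if_suffix: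
  assumes "suffix w X"
  shows "0 < occurrences w X"
proof -
  have "length X - length w \<in> {i. i + length w \<le> length X \<and> take (length w) (drop i X) = w}"
    using assms by (auto simp: suffix_iff_drop)
  then show ?thesis
    unfolding occurrences_def using finite_occurrence_positions card_gt_0_iff by blast
qed

lemma occurrences_append_mono: "occurrences w X \<le> occurrences w (X @ Z)"
proof (induction Z rule: rev_induct)
  case (snoc c Z)
  then show ?case using occurrences_snoc[of w "X @ Z" c] by simp
qed simp

lemma occurrences_less_append_if_suffix:
  assumes "suffix w (X @ Z)" and "Z \<noteq> []"
  shows "occurrences w X < occurrences w (X @ Z)"
proof -
  obtain Z' c where Z: "Z = Z' @ [c]" using assms(2) by (cases Z rule: rev_cases) auto
  have "occurrences w X \<le> occurrences w (X @ Z')" by (rule occurrences_append_mono)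
  also have "\<dots> < occurrences w (X @ Z)"
    using occurrences_snoc[of w "X @ Z'" c] assms(1) unfolding Z by simp
  finally show ?thesis .
qed

lemma suffix_append_left_iff:
  "length xs \<le> length ys \<Longrightarrow> suffix xs (U @ ys) \<longleftrightarrow> suffix xs ys"
  by (auto simp: suffix_append suffix_appendI)

lemma occurrences_append_overlap:
  assumes "length w = Suc (length v)" and "suffix v S"
  shows "occurrences w (S @ Z) = occurrences w S + occurrences w (v @ Z)"
proof (induction Z rule: rev_induct)
  case Nil
  then show ?case using occurrences_eq_0_if_shorter[of v w] assms(1) by simp
next
  case (snoc c Z)
  obtain U where S: "S = U @ v" using assms(2) by (auto simp: suffix_def)
  have "suffix w (S @ Z @ [c]) \<longleftrightarrow> suffix w (v @ Z @ [c])"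
    unfolding S using suffix_append_left_iff[of w "v @ Z @ [c]" U] assms(1) by simp
  then show ?case
    using occurrences_snoc[of w "S @ Z" c] occurrences_snoc[of w "v @ Z" c] snoc by simp
qed

definition continuations :: "nat \<Rightarrow> nat list \<Rightarrow> nat list \<Rightarrow> nat \<Rightarrow> nat \<Rightarrow> nat list set" where
  "continuations b w v k n = {Y. set Y \<subseteq> {..<b} \<and> length Y = n \<and> occurrences w (v @ Y) = k}"

definition first_hits :: "nat \<Rightarrow> nat list \<Rightarrow> nat \<Rightarrow> nat list set" where
  "first_hits b w m =
    {Y. set Y \<subseteq> {..<b} \<and> length Y = m \<and> occurrences w (tl w @ Y) = 1 \<and> suffix w (tl w @ Y)}"

lemma finite_continuations: "finite (continuations b w v k n)"
  by (rule finite_subset[OF _ finite_lists_length_eq[OF finite_lessThan[of b], of n]])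
     (auto simp: continuations_def)

lemma finite_first_hits: "finite (first_hits b w m)"
  by (rule finite_subset[OF _ finite_lists_length_eq[OF finite_lessThan[of b], of m]])
     (auto simp: first_hits_def)

lemma card_continuations_le: "card (continuations b w v k n) \<le> b ^ n"
proof -
  have "card (continuations b w v k n) \<le> card {Y. set Y \<subseteq> {..<b} \<and> length Y = n}"
    by (rule card_mono[OF finite_lists_length_eq]) (auto simp: continuations_def)
  then show ?thesis by (simp add: card_lists_length_eq)
qed

lemma continuations_0_0: "w \<noteq> [] \<Longrightarrow> continuations b w (tl w) 0 0 = {[]}"
  using occurrences_eq_0_if_shorter[of "tl w" w] by (auto simp: continuations_def)

lemma first_hits_0: "w \<noteq> [] \<Longrightarrow> first_hits b w 0 = {}"
  using occurrences_eq_0_if_shorter[of "tl w" w] by (auto simp: first_hits_def)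

text \<open>After a first hit, the string again ends with \<open>tl w\<close>, so counting restarts from scratch.\<close>

lemma occurrences_append_first_hit:
  assumes "w \<noteq> []" and "Y \<in> first_hits b w m"
  shows "occurrences w (tl w @ Y @ Z) = Suc (occurrences w (tl w @ Z))"
proof -
  have "suffix (tl w) (tl w @ Y)"
    using assms(2) suffix_tl suffix_order.trans unfolding first_hits_def by blast
  then have "occurrences w ((tl w @ Y) @ Z) = occurrences w (tl w @ Y) + occurrences w (tl w @ Z)"
    using assms(1) by (intro occurrences_append_overlap) auto
  then show ?thesis using assms(2) by (simp add: first_hits_def)
qed

lemma first_hits_append_eq_Nil:
  assumes "Y \<in> first_hits b w m" and "Y @ D \<in> first_hits b w m'"
  shows "D = []"
proof (rule ccontr)
  assume "D \<noteq> []"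
  then have "occurrences w (tl w @ Y) < occurrences w ((tl w @ Y) @ D)"
    using assms(2) by (intro occurrences_less_append_if_suffix) (auto simp: first_hits_def)
  then show False using assms by (simp add: first_hits_def)
qed

lemma inj_on_append_first_hits:
  "inj_on (\<lambda>(m, Y, Z). Y @ Z) (SIGMA m:UNIV. first_hits b w m \<times> UNIV)"
proof (rule inj_onI, clarsimp)
  fix m Y Z m' Y' Z'
  assume hits: "Y \<in> first_hits b w m" "Y' \<in> first_hits b w m'" and eq: "Y @ Z = Y' @ Z'"
  obtain D where "Y = Y' @ D \<or> Y @ D = Y'"
    using eq by (auto simp: append_eq_append_conv2)
  then have "Y = Y'"
    using hits first_hits_append_eq_Nil by fastforce
  with hits eq show "m = m' \<and> Y = Y' \<and> Z = Z'" by (auto simp: first_hits_def)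
qed

lemma exists_first_hit_prefix:
  assumes "w \<noteq> []"
  shows "set Y \<subseteq> {..<b} \<Longrightarrow> occurrences w (tl w @ Y) \<noteq> 0 \<Longrightarrow>
    \<exists>m \<le> length Y. take m Y \<in> first_hits b w m"
proof (induction Y rule: rev_induct)
  case Nil
  then show ?case using occurrences_eq_0_if_shorter[of "tl w" w] assms by simp
next
  case (snoc c Y)
  show ?case
  proof (cases "occurrences w (tl w @ Y) = 0")
    case True
    then show ?thesis using snoc.prems occurrences_snoc[of w "tl w @ Y" c]
      by (intro exI[of _ "length (Y @ [c])"]) (auto simp: first_hits_def split: if_splits)
  next
    case False
    then obtain m where "m \<le> length Y" "take m Y \<in> first_hits b w m"
      using snoc by auto
    then show ?thesis by (intro exI[of _ m]) auto
  qed
qed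

lemma continuations_Suc_eq:
  assumes "w \<noteq> []"
  shows "continuations b w (tl w) (Suc k) n = (\<lambda>(m, Y, Z). Y @ Z) `
    (SIGMA m:{..n}. first_hits b w m \<times> continuations b w (tl w) k (n - m))"
proof (intro equalityI subsetI)
  fix X
  assume X: "X \<in> continuations b w (tl w) (Suc k) n"
  then obtain m where m: "m \<le> length X" "take m X \<in> first_hits b w m"
    using exists_first_hit_prefix[OF assms, of X b] by (auto simp: continuations_def)
  then have "drop m X \<in> continuations b w (tl w) k (n - m)"
    using X occurrences_append_first_hit[OF assms m(2), of "drop m X"]
    by (auto simp: continuations_def dest: in_set_dropD)
  with m X show "X \<in> (\<lambda>(m, Y, Z). Y @ Z) `
      (SIGMA m:{..n}. first_hits b w m \<times> continuations b w (tl w) k (n - m))"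
    by (intro image_eqI[of _ _ "(m, take m X, drop m X)"]) (auto simp: continuations_def)
qed (auto simp: continuations_def first_hits_def occurrences_append_first_hit[OF assms])

lemma card_continuations_Suc:
  assumes "w \<noteq> []"
  shows "card (continuations b w (tl w) (Suc k) n) =
    (\<Sum>m\<le>n. card (first_hits b w m) * card (continuations b w (tl w) k (n - m)))"
proof -
  let ?S = "SIGMA m:{..n}. first_hits b w m \<times> continuations b w (tl w) k (n - m)"
  have "inj_on (\<lambda>(m, Y, Z). Y @ Z) ?S"
    by (rule inj_on_subset[OF inj_on_append_first_hits]) auto
  then have "card (continuations b w (tl w) (Suc k) n) = card ?S"
    unfolding continuations_Suc_eq[OF assms] by (rule card_image)
  also have "\<dots> = (\<Sum>m\<le>n. card (first_hits b w m) * card (continuations b w (tl w) k (n - m)))"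
    by (simp add: card_SigmaI finite_first_hits finite_continuations card_cartesian_product)
  finally show ?thesis .
qed

lemma first_hits_Suc_Un_continuations:
  "first_hits b w (Suc m) \<union> continuations b w (tl w) 0 (Suc m) =
    (\<lambda>(Y, c). Y @ [c]) ` (continuations b w (tl w) 0 m \<times> {..<b})"
proof (intro equalityI subsetI)
  fix X
  assume X: "X \<in> first_hits b w (Suc m) \<union> continuations b w (tl w) 0 (Suc m)"
  then obtain Y c where XY: "X = Y @ [c]"
    by (cases X rule: rev_cases) (auto simp: first_hits_def continuations_def)
  have "occurrences w (tl w @ Y) = 0"
    using X occurrences_snoc[of w "tl w @ Y" c] unfolding XY
    by (auto simp: first_hits_def continuations_def split: if_splits)
  with X show "X \<in> (\<lambda>(Y, c). Y @ [c]) ` (continuations b w (tl w) 0 m \<times> {..<b})"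
    unfolding XY by (intro image_eqI[of _ _ "(Y, c)"]) (auto simp: first_hits_def continuations_def)
next
  fix X
  assume "X \<in> (\<lambda>(Y, c). Y @ [c]) ` (continuations b w (tl w) 0 m \<times> {..<b})"
  then obtain Y c where "Y \<in> continuations b w (tl w) 0 m" "c < b" "X = Y @ [c]" by auto
  then show "X \<in> first_hits b w (Suc m) \<union> continuations b w (tl w) 0 (Suc m)"
    using occurrences_snoc[of w "tl w @ Y" c]
    by (auto simp: first_hits_def continuations_def split: if_splits)
qed

lemma card_first_hits_Suc_add:
  "card (first_hits b w (Suc m)) + card (continuations b w (tl w) 0 (Suc m)) =
    b * card (continuations b w (tl w) 0 m)"
proof -
  have "first_hits b w (Suc m) \<inter> continuations b w (tl w) 0 (Suc m) = {}"
    by (auto simp: first_hits_def continuations_def)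
  then have "card (first_hits b w (Suc m)) + card (continuations b w (tl w) 0 (Suc m)) =
      card ((\<lambda>(Y, c). Y @ [c]) ` (continuations b w (tl w) 0 m \<times> {..<b}))"
    unfolding first_hits_Suc_Un_continuations[symmetric]
    by (simp add: card_Un_disjoint finite_first_hits finite_continuations)
  also have "\<dots> = card (continuations b w (tl w) 0 m \<times> {..<b})"
    by (rule card_image) (auto intro: inj_onI)
  finally show ?thesis by (simp add: card_cartesian_product)
qed

lemma card_avoiding_add_length_le:
  assumes "set w \<subseteq> {..<b}"
  shows "card (continuations b w (tl w) 0 (n + length w)) \<le>
    card (continuations b w (tl w) 0 n) * (b ^ length w - 1)"
proof -
  let ?blocks = "{B. set B \<subseteq> {..<b} \<and> length B = length w} - {w}"
  let ?split = "\<lambda>Y. (take n Y, drop n Y)"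
  have "?split ` continuations b w (tl w) 0 (n + length w) \<subseteq>
      continuations b w (tl w) 0 n \<times> ?blocks"
  proof (rule image_subsetI)
    fix Y
    assume Y: "Y \<in> continuations b w (tl w) 0 (n + length w)"
    have "occurrences w (tl w @ take n Y) \<le> occurrences w ((tl w @ take n Y) @ drop n Y)"
      by (rule occurrences_append_mono)
    then have "take n Y \<in> continuations b w (tl w) 0 n"
      using Y by (auto simp: continuations_def dest: in_set_takeD)
    moreover have "\<not> suffix w (tl w @ Y)"
      using Y occurrences_pos_if_suffix[of w "tl w @ Y"] by (auto simp: continuations_def)
    then have "drop n Y \<noteq> w" by (metis suffix_appendI suffix_drop)
    ultimately show "?split Y \<in> continuations b w (tl w) 0 n \<times> ?blocks"
      using Y by (auto simp: continuations_def dest: in_set_dropD)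
  qed
  moreover have "inj_on ?split (continuations b w (tl w) 0 (n + length w))"
    by (rule inj_onI) (metis append_take_drop_id prod.inject)
  ultimately have "card (continuations b w (tl w) 0 (n + length w)) \<le>
      card (continuations b w (tl w) 0 n \<times> ?blocks)"
    by (intro card_inj_on_le) (simp_all add: finite_continuations finite_lists_length_eq)
  also have "\<dots> = card (continuations b w (tl w) 0 n) * (b ^ length w - 1)"
    using assms by (simp add: card_cartesian_product card_lists_length_eq finite_lists_length_eq)
  finally show ?thesis .
qed

lemma summable_if_shift_contraction:
  fixes x :: "nat \<Rightarrow> real"
  assumes nonneg: "\<And>n. 0 \<le> x n" and bounded: "\<And>n. x n \<le> C"
    and contraction: "\<And>n. x (n + p) \<le> q * x n" and "0 < p" "0 \<le> q" "q < 1"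
  shows "summable x"
proof -
  define s where "s = root p q"
  have s: "0 \<le> s" "s < 1" "s ^ p = q"
    using assms(4-6) unfolding s_def by (auto intro: real_root_pow_pos2)
  have decay: "x (j + p * t) \<le> C * q ^ t" for j t
  proof (induction t)
    case (Suc t)
    have "x (j + p * Suc t) \<le> q * x (j + p * t)"
      using contraction[of "j + p * t"] by (simp add: algebra_simps)
    also have "\<dots> \<le> q * (C * q ^ t)" using Suc assms(5) by (rule mult_left_mono)
    finally show ?case by (simp add: algebra_simps)
  qed (simp add: bounded)
  have "x (n + p) \<le> C * s ^ n" for n
  proof -
    have "n + p = n mod p + p * Suc (n div p)" by simp
    then have "x (n + p) \<le> C * q ^ Suc (n div p)" using decay by metis
    also have "\<dots> = C * s ^ (p * Suc (n div p))" by (simp only: power_mult s(3))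
    also have "\<dots> \<le> C * s ^ n"
    proof (intro mult_left_mono power_decreasing)
      show "n \<le> p * Suc (n div p)"
        using mod_less_divisor[OF assms(4), of n] mult_div_mod_eq[of p n]
        unfolding mult_Suc_right by linarith
      show "0 \<le> C" using nonneg bounded order_trans by blast
    qed (use s in auto)
    finally show ?thesis .
  qed
  then have "norm (x (n + p)) \<le> C * s ^ n" for n by (simp add: nonneg)
  moreover have "summable (\<lambda>n. C * s ^ n)"
    using s by (intro summable_mult summable_geometric) auto
  ultimately have "summable (\<lambda>n. x (n + p))"
    by (blast intro: summable_comparison_test')
  then show ?thesis by (simp add: summable_iff_shift)
qed

definition mass :: "nat \<Rightarrow> nat list \<Rightarrow> nat \<Rightarrow> nat \<Rightarrow> real" where
  "mass b w k n = real (card (continuations b w (tl w) k n)) * (1 / real b) ^ n"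

definition first_hit_mass :: "nat \<Rightarrow> nat list \<Rightarrow> nat \<Rightarrow> real" where
  "first_hit_mass b w m = real (card (first_hits b w m)) * (1 / real b) ^ m"

lemma mass_nonneg: "0 \<le> mass b w k n"
  by (simp add: mass_def)

lemma first_hit_mass_nonneg: "0 \<le> first_hit_mass b w m"
  by (simp add: first_hit_mass_def)

lemma mass_le_1:
  assumes "0 < b"
  shows "mass b w k n \<le> 1"
proof -
  have "real (card (continuations b w (tl w) k n)) \<le> real b ^ n"
    using card_continuations_le[of b w "tl w" k n] by (simp only: flip: of_nat_power of_nat_le_iff)
  then show ?thesis using assms by (simp add: mass_def power_one_over)
qed

lemma mass_add_length_le:
  assumes "0 < b" and "set w \<subseteq> {..<b}"
  shows "mass b w 0 (n + length w) \<le> (1 - (1 / real b) ^ length w) * mass b w 0 n"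
proof -
  let ?p = "length w"
  have "1 \<le> b ^ ?p" using assms(1) by simp
  have "real (card (continuations b w (tl w) 0 (n + ?p))) \<le>
      real (card (continuations b w (tl w) 0 n) * (b ^ ?p - 1))"
    using card_avoiding_add_length_le[OF assms(2), of n] by (simp only: of_nat_le_iff)
  also have "\<dots> = real (card (continuations b w (tl w) 0 n)) * (real b ^ ?p - 1)"
    using \<open>1 \<le> b ^ ?p\<close> by (simp add: of_nat_diff)
  finally have "real (card (continuations b w (tl w) 0 (n + ?p))) \<le>
      real (card (continuations b w (tl w) 0 n)) * (real b ^ ?p - 1)" .
  then have "mass b w 0 (n + ?p) \<le>
      real (card (continuations b w (tl w) 0 n)) * (real b ^ ?p - 1) * (1 / real b) ^ (n + ?p)"
    unfolding mass_def by (simp add: mult_right_mono)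
  also have "\<dots> = (1 - (1 / real b) ^ ?p) * mass b w 0 n"
    using assms(1) by (simp add: mass_def power_add power_one_over field_simps)
  finally show ?thesis .
qed

lemma summable_avoiding_mass:
  assumes "2 \<le> b" and "w \<noteq> []" and "set w \<subseteq> {..<b}"
  shows "summable (mass b w 0)"
proof (rule summable_if_shift_contraction[where C = 1])
  show "mass b w 0 (n + length w) \<le> (1 - (1 / real b) ^ length w) * mass b w 0 n" for n
    using assms by (intro mass_add_length_le) auto
  show "0 \<le> 1 - (1 / real b) ^ length w" "1 - (1 / real b) ^ length w < 1"
    using assms(1) by (auto simp: power_le_one)
qed (use assms in \<open>auto simp: mass_nonneg mass_le_1\<close>)

lemma sum_first_hit_mass:
  assumes "0 < b" and "w \<noteq> []"
  shows "(\<Sum>m\<le>N. first_hit_mass b w m) = 1 - mass b w 0 N"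
proof (induction N)
  case 0
  show ?case
    using assms by (simp add: first_hit_mass_def mass_def first_hits_0 continuations_0_0)
next
  case (Suc N)
  have "real (card (first_hits b w (Suc N))) + real (card (continuations b w (tl w) 0 (Suc N))) =
      real b * real (card (continuations b w (tl w) 0 N))"
    using card_first_hits_Suc_add by (simp only: flip: of_nat_add of_nat_mult)
  then have "first_hit_mass b w (Suc N) + mass b w 0 (Suc N) = mass b w 0 N"
    using assms(1) unfolding first_hit_mass_def mass_def
    by (simp add: power_one_over field_simps flip: distrib_right)
  with Suc show ?case by simp
qed

lemma first_hit_mass_sums:
  assumes "2 \<le> b" and "w \<noteq> []" and "set w \<subseteq> {..<b}"
  shows "first_hit_mass b w sums 1"
proof -
  have "mass b w 0 \<longlonglongrightarrow> 0"
    using summable_avoiding_mass[OF assms] by (rule summable_LIMSEQ_zero)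
  then have "(\<lambda>N. 1 - mass b w 0 N) \<longlonglongrightarrow> 1 - 0" by (intro tendsto_intros)
  then show ?thesis
    using assms unfolding sums_def_le by (simp add: sum_first_hit_mass)
qed

lemma mass_Suc:
  assumes "w \<noteq> []"
  shows "mass b w (Suc k) n = (\<Sum>m\<le>n. first_hit_mass b w m * mass b w k (n - m))"
  unfolding mass_def first_hit_mass_def card_continuations_Suc[OF assms] of_nat_sum sum_distrib_right
  by (intro sum.cong refl) (simp flip: power_add)

lemma mass_sums:
  assumes "2 \<le> b" and "w \<noteq> []" and "set w \<subseteq> {..<b}"
  shows "mass b w k sums (\<Sum>n. mass b w 0 n)"
proof (induction k)
  case 0
  show ?case using summable_avoiding_mass[OF assms] by (rule summable_sums)
next
  case (Suc k)
  have "(\<lambda>n. \<Sum>m\<le>n. first_hit_mass b w m * mass b w k (n - m)) sums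
      ((\<Sum>n. first_hit_mass b w n) * (\<Sum>n. mass b w k n))"
    using first_hit_mass_sums[OF assms] Suc
    by (intro Cauchy_product_sums) (auto simp: sums_iff first_hit_mass_nonneg mass_nonneg)
  then show ?case
    using first_hit_mass_sums[OF assms] Suc by (simp add: mass_Suc[OF assms(2)] sums_iff)
qed

lemma Z_coeff_add_length:
  assumes "set v \<subseteq> {..<b}"
  shows "Z_coeff b w v k (n + length v) = card (continuations b w v k n)"
proof -
  have "{X \<in> b_strings b. length X = n + length v \<and> prefix v X \<and> occurrences w X = k} =
      (\<lambda>Y. v @ Y) ` continuations b w v k n"
    using assms by (fastforce simp: b_strings_def continuations_def prefix_def)
  then show ?thesis unfolding Z_coeff_def by (simp add: card_image inj_on_def)
qed

lemma Z_coeff_less_length: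
  assumes "l < length v"
  shows "Z_coeff b w v k l = 0"
proof -
  have "{X \<in> b_strings b. length X = l \<and> prefix v X \<and> occurrences w X = k} = {}"
    using assms by (auto dest: prefix_length_le)
  then show ?thesis unfolding Z_coeff_def by (metis card.empty)
qed

theorem lemma4:
  fixes b :: nat and w :: "nat list"
  assumes "b \<ge> 2" and "length w \<ge> 1" and "set w \<subseteq> {..<b}"
  shows "\<exists>M::real. \<forall>k::nat.
           (\<lambda>l. real (Z_coeff b w (tl w) k l) * (1 / real b) ^ l) sums M"
proof (intro exI allI)
  fix k
  let ?t = "\<lambda>l. real (Z_coeff b w (tl w) k l) * (1 / real b) ^ l"
  let ?q = "length (tl w)"
  have w: "w \<noteq> []" using assms(2) by auto
  then have v: "set (tl w) \<subseteq> {..<b}" using assms(3) by (cases w) auto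
  have "?t (n + ?q) = mass b w k n * (1 / real b) ^ ?q" for n
    unfolding Z_coeff_add_length[OF v] mass_def power_add by simp
  then have "(\<lambda>n. ?t (n + ?q)) sums ((\<Sum>n. mass b w 0 n) * (1 / real b) ^ ?q)"
    using sums_mult2[OF mass_sums[OF assms(1) w assms(3)]] by simp
  moreover have "(\<Sum>l<?q. ?t l) = 0" by (simp add: Z_coeff_less_length)
  ultimately show "?t sums ((\<Sum>n. mass b w 0 n) * (1 / real b) ^ ?q)"
    using sums_iff_shift[of ?t ?q] by simp
qed

end
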